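(* Every connected (finite, simple) graph $G$ satisfies $\mathrm{rc}(G) \leq 3\,\mathrm{f}(G) - 1$.
   Context: For an edge-coloring of a graph $G$, a path is rainbow if no two of its edges have the same color; $G$ is rainbow-connected if every pair of vertices is joined by a rainbow path. The rainbow connection number $\mathrm{rc}(G)$ is the minimum number of colors in an edge-coloring making $G$ rainbow-connected. The forest number $\mathrm{f}(G)$ is the maximum number of vertices of an induced subgraph of $G$ that is a forest. *)

theory Defs
  imports Main
begin

definition simple_graph :: "'a set \<Rightarrow> 'a set set \<Rightarrow> bool" where
  "simple_graph V E \<longleftrightarrow> finite V \<and> (\<forall>e\<in>E. e \<subseteq> V \<and> card e = 2)"

fun walk_edges :: "'a list \<Rightarrow> 'a set list" where
  "walk_edges (x # y # xs) = {x, y} # walk_edges (y # xs)"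
| "walk_edges _ = []"

definition is_path :: "'a set \<Rightarrow> 'a set set \<Rightarrow> 'a list \<Rightarrow> 'a \<Rightarrow> 'a \<Rightarrow> bool" where
  "is_path V E p u v \<longleftrightarrow> p \<noteq> [] \<and> hd p = u \<and> last p = v \<and> distinct p \<and>
     set p \<subseteq> V \<and> set (walk_edges p) \<subseteq> E"

definition connected_graph :: "'a set \<Rightarrow> 'a set set \<Rightarrow> bool" where
  "connected_graph V E \<longleftrightarrow> (\<forall>u\<in>V. \<forall>v\<in>V. \<exists>p. is_path V E p u v)"

definition rainbow_path :: "('a set \<Rightarrow> nat) \<Rightarrow> 'a list \<Rightarrow> bool" where
  "rainbow_path c p \<longleftrightarrow> distinct (map c (walk_edges p))"

definition rainbow_connected :: "'a set \<Rightarrow> 'a set set \<Rightarrow> ('a set \<Rightarrow> nat) \<Rightarrow> bool" where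
  "rainbow_connected V E c \<longleftrightarrow>
     (\<forall>u\<in>V. \<forall>v\<in>V. \<exists>p. is_path V E p u v \<and> rainbow_path c p)"

definition rc :: "'a set \<Rightarrow> 'a set set \<Rightarrow> nat" where
  "rc V E = (LEAST k. \<exists>c. (\<forall>e\<in>E. c e < k) \<and> rainbow_connected V E c)"

definition induced_edges :: "'a set set \<Rightarrow> 'a set \<Rightarrow> 'a set set" where
  "induced_edges E S = {e \<in> E. e \<subseteq> S}"

definition is_cycle :: "'a set \<Rightarrow> 'a set set \<Rightarrow> 'a list \<Rightarrow> bool" where
  "is_cycle V E cs \<longleftrightarrow> length cs \<ge> 3 \<and> distinct cs \<and> set cs \<subseteq> V \<and>
     set (walk_edges cs) \<subseteq> E \<and> {last cs, hd cs} \<in> E"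

definition is_forest :: "'a set \<Rightarrow> 'a set set \<Rightarrow> bool" where
  "is_forest V E \<longleftrightarrow> \<not> (\<exists>cs. is_cycle V E cs)"

definition forest_number :: "'a set \<Rightarrow> 'a set set \<Rightarrow> nat" where
  "forest_number V E = Max {card S | S. S \<subseteq> V \<and> is_forest S (induced_edges E S)}"

end

theory Submission
  imports Defs
begin

(* Let F be a maximum induced forest. A vertex outside F with at most one neighbour in F could
   be added to F without creating a cycle, so every vertex outside F has two distinct neighbours
   in F. Starting from one vertex of F, grow a set D with a colouring under which any two vertices
   of D are joined by a rainbow path inside D: as F dominates the graph, a vertex of F - D can be
   reached from D by a path of at most three edges with inner vertices outside D and F, and
   attaching this path with fresh colours keeps the property. After |F| - 1 steps D contains F
   and at most 3 (|F| - 1) colours are used. Finally each vertex outside D is joined to two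
   distinct neighbours in D, with one new colour for the first and another for the second of
   these edges; this gives 3 |F| - 1 colours. *)

section \<open>Walks and paths\<close>

lemma walk_edges_Cons: "p \<noteq> [] \<Longrightarrow> walk_edges (x # p) = {x, hd p} # walk_edges p"
  by (cases p) auto

lemma walk_edges_snoc: "p \<noteq> [] \<Longrightarrow> walk_edges (p @ [x]) = walk_edges p @ [{last p, x}]"
  by (induction p rule: walk_edges.induct) auto

lemma walk_edges_rev: "walk_edges (rev p) = rev (walk_edges p)"
proof (induction p rule: walk_edges.induct)
  case (1 x y xs)
  have "walk_edges (rev (x # y # xs)) = walk_edges (rev (y # xs) @ [x])" by simp
  also have "\<dots> = walk_edges (rev (y # xs)) @ [{x, y}]"
    using walk_edges_snoc[of "rev (y # xs)" x] by (simp add: last_rev insert_commute)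
  finally show ?case using 1 by simp
qed auto

lemma walk_edge_subset: "e \<in> set (walk_edges p) \<Longrightarrow> e \<subseteq> set p"
  by (induction p rule: walk_edges.induct) auto

lemma walk_edges_crossing:
  assumes "p \<noteq> []" "hd p \<notin> Q" "last p \<in> Q"
  shows "\<exists>a b. {a, b} \<in> set (walk_edges p) \<and> a \<notin> Q \<and> b \<in> Q"
  using assms by (induction p rule: walk_edges.induct) (auto split: if_splits)

lemma is_path_rev: "is_path V E p u v \<Longrightarrow> is_path V E (rev p) v u"
  by (auto simp: is_path_def walk_edges_rev hd_rev last_rev)

lemma rainbow_path_rev: "rainbow_path c (rev p) \<longleftrightarrow> rainbow_path c p"
  by (simp add: rainbow_path_def walk_edges_rev rev_map[symmetric])

lemma edge_vertices:
  assumes "simple_graph V E" "{a, b} \<in> E"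
  shows "a \<in> V" "b \<in> V" "a \<noteq> b"
proof -
  have "{a, b} \<subseteq> V" "card {a, b} = 2" using assms unfolding simple_graph_def by auto
  then show "a \<in> V" "b \<in> V" "a \<noteq> b" by (auto simp: card_insert_if split: if_splits)
qed

lemma connected_graph_crossing_edge:
  assumes "connected_graph V E" "x \<in> V" "y \<in> V" "x \<notin> Q" "y \<in> Q"
  obtains a b where "{a, b} \<in> E" "a \<in> V" "b \<in> V" "a \<notin> Q" "b \<in> Q"
proof -
  obtain p where p: "is_path V E p x y" using assms unfolding connected_graph_def by blast
  then obtain a b where "{a, b} \<in> set (walk_edges p)" "a \<notin> Q" "b \<in> Q"
    using walk_edges_crossing[of p Q] assms unfolding is_path_def by auto
  with p walk_edge_subset show thesis
    by (intro that) (auto simp: is_path_def)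
qed

section \<open>Maximum induced forests\<close>

lemma is_cycle_rotate1:
  assumes "is_cycle V E cs"
  shows "is_cycle V E (rotate1 cs)"
proof -
  have "3 \<le> length cs" using assms unfolding is_cycle_def by simp
  then obtain x xs where cs: "cs = x # xs" by (cases cs) auto
  then have "xs \<noteq> []" using \<open>3 \<le> length cs\<close> by auto
  have "walk_edges (rotate1 cs) = walk_edges xs @ [{last xs, x}]"
    using walk_edges_snoc[OF \<open>xs \<noteq> []\<close>] cs by simp
  moreover have "walk_edges cs = {x, hd xs} # walk_edges xs"
    using walk_edges_Cons[OF \<open>xs \<noteq> []\<close>] cs by simp
  ultimately show ?thesis
    using assms \<open>xs \<noteq> []\<close> cs unfolding is_cycle_def by (auto simp: insert_commute)
qed

lemma is_cycle_rotate: "is_cycle V E cs \<Longrightarrow> is_cycle V E (rotate n cs)"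
  by (induction n) (simp_all add: is_cycle_rotate1)

lemma is_cycle_neighbours:
  assumes "is_cycle V E cs" "v \<in> set cs"
  obtains a b where "a \<in> set cs - {v}" "b \<in> set cs - {v}" "a \<noteq> b" "{v, a} \<in> E" "{v, b} \<in> E"
proof -
  obtain i where "i < length cs" "cs ! i = v" using assms(2) by (auto simp: in_set_conv_nth)
  define cs' where "cs' = rotate i cs"
  have cyc: "is_cycle V E cs'" and "set cs' = set cs"
    using is_cycle_rotate[OF assms(1)] unfolding cs'_def by simp_all
  moreover have "hd cs' = v"
  proof -
    have "cs' \<noteq> []" using \<open>i < length cs\<close> unfolding cs'_def by auto
    then show ?thesis
      using nth_rotate[of 0 cs i] \<open>i < length cs\<close> \<open>cs ! i = v\<close>
      unfolding cs'_def by (simp add: hd_conv_nth)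
  qed
  moreover have "3 \<le> length cs'" using cyc unfolding is_cycle_def by simp
  ultimately obtain a rest where cs': "cs' = v # a # rest"
    by (cases cs'; cases "tl cs'") auto
  with \<open>3 \<le> length cs'\<close> have "rest \<noteq> []" by auto
  show thesis
  proof (rule that)
    show "a \<in> set cs - {v}" "last rest \<in> set cs - {v}" "a \<noteq> last rest"
      using cyc cs' \<open>rest \<noteq> []\<close> \<open>set cs' = set cs\<close> unfolding is_cycle_def by auto
    show "{v, a} \<in> E" "{v, last rest} \<in> E"
      using cyc cs' \<open>rest \<noteq> []\<close> unfolding is_cycle_def by (auto simp: insert_commute)
  qed
qed

lemma is_cycle_induced:
  assumes "is_cycle V E cs" "set cs \<subseteq> W"
  shows "is_cycle W (induced_edges E W) cs"
proof -
  have "cs \<noteq> []" using assms(1) unfolding is_cycle_def by auto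
  then show ?thesis
    using assms walk_edge_subset unfolding is_cycle_def induced_edges_def by fastforce
qed

lemma is_forest_singleton: "is_forest {v} E"
proof -
  have "length cs \<le> 1" if "distinct cs" "set cs \<subseteq> {v}" for cs :: "'a list"
    using distinct_card[OF that(1)] card_mono[OF _ that(2)] by simp
  then show ?thesis unfolding is_forest_def is_cycle_def by fastforce
qed

lemma is_forest_insert:
  assumes forest: "is_forest F (induced_edges E F)"
    and unique: "\<And>a b. a \<in> F \<Longrightarrow> b \<in> F \<Longrightarrow> {v, a} \<in> E \<Longrightarrow> {v, b} \<in> E \<Longrightarrow> a = b"
  shows "is_forest (insert v F) (induced_edges E (insert v F))"
  unfolding is_forest_def
proof
  assume "\<exists>cs. is_cycle (insert v F) (induced_edges E (insert v F)) cs"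
  then obtain cs where cyc: "is_cycle (insert v F) (induced_edges E (insert v F)) cs" by blast
  then have sub: "set cs \<subseteq> insert v F" unfolding is_cycle_def by simp
  show False
  proof (cases "v \<in> set cs")
    case True
    then obtain a b where "a \<in> set cs - {v}" "b \<in> set cs - {v}" "a \<noteq> b"
      "{v, a} \<in> induced_edges E (insert v F)" "{v, b} \<in> induced_edges E (insert v F)"
      using is_cycle_neighbours[OF cyc] by metis
    then show False using unique sub unfolding induced_edges_def by blast
  next
    case False
    then have "is_cycle F (induced_edges (induced_edges E (insert v F)) F) cs"
      using is_cycle_induced[OF cyc] sub by blast
    moreover have "induced_edges (induced_edges E (insert v F)) F = induced_edges E F"
      unfolding induced_edges_def by blast
    ultimately show False using forest unfolding is_forest_def by auto
  qed
qed

lemma maximum_induced_forest_two_neighbours: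
  assumes "finite V" "F \<subseteq> V" "is_forest F (induced_edges E F)"
    and max: "\<And>S. S \<subseteq> V \<Longrightarrow> is_forest S (induced_edges E S) \<Longrightarrow> card S \<le> card F"
    and "v \<in> V - F"
  shows "\<exists>a b. a \<in> F \<and> b \<in> F \<and> a \<noteq> b \<and> {v, a} \<in> E \<and> {v, b} \<in> E"
proof (rule ccontr)
  assume "\<not> ?thesis"
  then have "is_forest (insert v F) (induced_edges E (insert v F))"
    using is_forest_insert[OF assms(3)] by blast
  then have "card (insert v F) \<le> card F" using max assms(2,5) by blast
  moreover have "finite F" using assms(1,2) finite_subset by blast
  ultimately show False using assms(5) by simp
qed

lemma maximum_induced_forest:
  assumes "finite V" "V \<noteq> {}"
  obtains F where "F \<subseteq> V" "F \<noteq> {}" "is_forest F (induced_edges E F)"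
    "card F = forest_number V E"
    "\<And>S. S \<subseteq> V \<Longrightarrow> is_forest S (induced_edges E S) \<Longrightarrow> card S \<le> card F"
proof -
  define C where "C = {card S | S. S \<subseteq> V \<and> is_forest S (induced_edges E S)}"
  have "finite C" unfolding C_def using assms(1) by auto
  have fn: "forest_number V E = Max C" unfolding forest_number_def C_def ..
  obtain v where "v \<in> V" using assms(2) by blast
  then have "card {v} \<in> C"
    unfolding C_def using is_forest_singleton[of v] by (intro CollectI exI[of _ "{v}"]) simp
  then have "Max C \<in> C" "1 \<le> Max C"
    using Max_in[OF \<open>finite C\<close>] Max_ge[OF \<open>finite C\<close>, of "card {v}"] by auto
  then obtain F where F: "F \<subseteq> V" "is_forest F (induced_edges E F)" "card F = Max C"
    unfolding C_def mem_Collect_eq by metis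
  show thesis
  proof (rule that[OF F(1) _ F(2)])
    show "F \<noteq> {}" using F(3) \<open>1 \<le> Max C\<close> by auto
    show "card F = forest_number V E" using F(3) fn by simp
    show "card S \<le> card F" if "S \<subseteq> V" "is_forest S (induced_edges E S)" for S
    proof -
      have "card S \<in> C" unfolding C_def using that by (intro CollectI exI[of _ S]) simp
      then show ?thesis using Max_ge[OF \<open>finite C\<close>] F(3) by simp
    qed
  qed
qed

section \<open>Rainbow-connected vertex sets\<close>

definition rainbow_joined ::
    "'a set \<Rightarrow> 'a set set \<Rightarrow> 'a set \<Rightarrow> ('a set \<Rightarrow> nat) \<Rightarrow> nat \<Rightarrow> 'a \<Rightarrow> 'a \<Rightarrow> bool" where
  "rainbow_joined V E S c k x y \<longleftrightarrow>
     (\<exists>p. is_path V E p x y \<and> set p \<subseteq> S \<and> rainbow_path c p \<and> (\<forall>e\<in>set (walk_edges p). c e < k))"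

definition rainbow_connected_on ::
    "'a set \<Rightarrow> 'a set set \<Rightarrow> 'a set \<Rightarrow> ('a set \<Rightarrow> nat) \<Rightarrow> nat \<Rightarrow> bool" where
  "rainbow_connected_on V E S c k \<longleftrightarrow> (\<forall>x\<in>S. \<forall>y\<in>S. rainbow_joined V E S c k x y)"

lemma rainbow_joined_refl: "x \<in> V \<Longrightarrow> x \<in> S \<Longrightarrow> rainbow_joined V E S c k x x"
  unfolding rainbow_joined_def by (intro exI[of _ "[x]"]) (simp add: is_path_def rainbow_path_def)

lemma rainbow_joined_sym:
  assumes "rainbow_joined V E S c k x y"
  shows "rainbow_joined V E S c k y x"
proof -
  obtain p where "is_path V E p x y" "set p \<subseteq> S" "rainbow_path c p" "\<forall>e\<in>set (walk_edges p). c e < k"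
    using assms unfolding rainbow_joined_def by blast
  then show ?thesis
    unfolding rainbow_joined_def
    by (intro exI[of _ "rev p"]) (simp add: is_path_rev rainbow_path_rev walk_edges_rev)
qed

lemma rainbow_joined_mono:
  "rainbow_joined V E S c k x y \<Longrightarrow> S \<subseteq> S' \<Longrightarrow> k \<le> k' \<Longrightarrow> rainbow_joined V E S' c k' x y"
  unfolding rainbow_joined_def by (fastforce intro: order.strict_trans2)

lemma rainbow_joined_cong:
  assumes "rainbow_joined V E S c k x y" and "\<And>e. e \<subseteq> S \<Longrightarrow> c e < k \<Longrightarrow> c' e = c e"
  shows "rainbow_joined V E S c' k x y"
proof -
  obtain p where p: "is_path V E p x y" "set p \<subseteq> S" "rainbow_path c p"
    and bound: "\<forall>e\<in>set (walk_edges p). c e < k"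
    using assms(1) unfolding rainbow_joined_def by blast
  have same: "c' e = c e" if "e \<in> set (walk_edges p)" for e
  proof (rule assms(2))
    show "e \<subseteq> S" using walk_edge_subset[OF that] p(2) by blast
    show "c e < k" using bound that by blast
  qed
  then have "map c' (walk_edges p) = map c (walk_edges p)" by simp
  with p(3) have "rainbow_path c' p" unfolding rainbow_path_def by metis
  then show ?thesis
    using p(1,2) bound same unfolding rainbow_joined_def by auto
qed

lemma rainbow_joined_Cons:
  assumes "rainbow_joined V E S c k a y" "x \<in> V" "x \<notin> S" "{x, a} \<in> E" "c {x, a} = k"
  shows "rainbow_joined V E (insert x S) c (Suc k) x y"
proof -
  obtain p where p: "is_path V E p a y" "set p \<subseteq> S" "rainbow_path c p"
    and bound: "\<forall>e\<in>set (walk_edges p). c e < k"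
    using assms(1) unfolding rainbow_joined_def by blast
  have "p \<noteq> []" "hd p = a" using p(1) unfolding is_path_def by auto
  then have edges: "walk_edges (x # p) = {x, a} # walk_edges p"
    using walk_edges_Cons by metis
  have "x \<notin> set p" using p(2) assms(3) by blast
  then have "is_path V E (x # p) x y"
    using p(1) assms(2,4) edges \<open>p \<noteq> []\<close> unfolding is_path_def by simp
  moreover have "rainbow_path c (x # p)"
    using p(3) bound assms(5) edges unfolding rainbow_path_def by auto
  moreover have "\<forall>e\<in>set (walk_edges (x # p)). c e < Suc k"
    using bound assms(5) edges by auto
  ultimately show ?thesis
    using p(2) unfolding rainbow_joined_def by (intro exI[of _ "x # p"]) auto
qed

lemma rainbow_connected_on_subset: "rainbow_connected_on V E S c k \<Longrightarrow> S \<subseteq> V"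
  unfolding rainbow_connected_on_def rainbow_joined_def is_path_def
  by (fastforce dest: hd_in_set)

lemma rainbow_connected_on_singleton: "s \<in> V \<Longrightarrow> rainbow_connected_on V E {s} c k"
  unfolding rainbow_connected_on_def by (simp add: rainbow_joined_refl)

lemma rainbow_connected_on_mono:
  "rainbow_connected_on V E S c k \<Longrightarrow> k \<le> k' \<Longrightarrow> rainbow_connected_on V E S c k'"
  unfolding rainbow_connected_on_def by (blast intro: rainbow_joined_mono[OF _ order_refl])

lemma rainbow_connected_on_cong:
  assumes "rainbow_connected_on V E S c k" and "\<And>e. e \<subseteq> S \<Longrightarrow> c e < k \<Longrightarrow> c' e = c e"
  shows "rainbow_connected_on V E S c' k"
  unfolding rainbow_connected_on_def
proof (intro ballI)
  fix x y assume "x \<in> S" "y \<in> S"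
  show "rainbow_joined V E S c' k x y"
  proof (rule rainbow_joined_cong)
    show "rainbow_joined V E S c k x y"
      using assms(1) \<open>x \<in> S\<close> \<open>y \<in> S\<close> unfolding rainbow_connected_on_def by blast
  qed (rule assms(2))
qed

lemma rainbow_connected_on_insert:
  assumes S: "rainbow_connected_on V E S c k"
    and "s \<in> S" "w \<in> V" "w \<notin> S" "{s, w} \<in> E"
  shows "rainbow_connected_on V E (insert w S) (c({s, w} := k)) (Suc k)"
proof -
  let ?c = "c({s, w} := k)"
  have "rainbow_connected_on V E S ?c k"
    using \<open>w \<notin> S\<close> by (intro rainbow_connected_on_cong[OF S]) auto
  then have old: "rainbow_joined V E S ?c k x y" if "x \<in> S" "y \<in> S" for x y
    using that unfolding rainbow_connected_on_def by blast
  have new: "rainbow_joined V E (insert w S) ?c (Suc k) w y" if "y \<in> S" for y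
    using rainbow_joined_Cons[OF old[OF \<open>s \<in> S\<close> that]] assms(3-5)
    by (simp add: insert_commute)
  have "rainbow_joined V E (insert w S) ?c (Suc k) x y" if "x \<in> insert w S" "y \<in> insert w S" for x y
    using that old[THEN rainbow_joined_mono, of _ _ "insert w S" "Suc k"] new
      rainbow_joined_sym[OF new] rainbow_joined_refl[OF \<open>w \<in> V\<close>]
    by auto
  then show ?thesis unfolding rainbow_connected_on_def by blast
qed

lemma rainbow_connected_on_add_path:
  assumes "rainbow_connected_on V E S c k" "is_path V E (s # q) s u" "s \<in> S" "set q \<inter> S = {}"
  shows "\<exists>c'. rainbow_connected_on V E (S \<union> set q) c' (k + length q)"
  using assms
proof (induction q arbitrary: s S c k)
  case Nil
  then show ?case by auto
next
  case (Cons w q)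
  have w: "{s, w} \<in> E" "w \<in> V" "w \<notin> S" and q: "is_path V E (w # q) w u"
    using Cons.prems(2,4) by (auto simp: is_path_def)
  have S': "rainbow_connected_on V E (insert w S) (c({s, w} := k)) (Suc k)"
    using rainbow_connected_on_insert[OF Cons.prems(1,3)] w by blast
  have "set q \<inter> insert w S = {}"
    using Cons.prems(2,4) by (auto simp: is_path_def)
  then obtain c' where "rainbow_connected_on V E (insert w S \<union> set q) c' (Suc k + length q)"
    using Cons.IH[OF S' q insertI1] by blast
  then show ?case by (intro exI[of _ c']) simp
qed

lemma short_path_to_dominating_set:
  assumes G: "simple_graph V E" "connected_graph V E"
    and dom: "\<forall>v\<in>V - F. \<exists>z\<in>F. {v, z} \<in> E"
    and "S \<subseteq> V" "S \<noteq> {}" "F \<subseteq> V" "F - S \<noteq> {}"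
  obtains s u q where "s \<in> S" "u \<in> F - S" "is_path V E (s # q) s u"
    "set q \<inter> S = {}" "set q \<inter> F = {u}" "length q \<le> 3"
proof -
  note path = that
  define N where "N = {w \<in> V - S - F. \<exists>u\<in>F - S. {w, u} \<in> E}"
  obtain x y where "x \<in> S" "y \<in> F - S" using assms(5,7) by blast
  then have "x \<in> V" "y \<in> V" "x \<notin> (F - S) \<union> N" "y \<in> (F - S) \<union> N"
    using assms(4,6) unfolding N_def by auto
  then obtain a b where ab: "{a, b} \<in> E" "a \<notin> (F - S) \<union> N" "b \<in> (F - S) \<union> N"
    by (rule connected_graph_crossing_edge[OF G(2)])
  have "a \<in> V" "b \<in> V" "a \<noteq> b" using edge_vertices[OF G(1) ab(1)] by auto
  \<comment> \<open>If a \<notin> S, then a \<notin> F and its neighbour in F lies in S, as otherwise a \<in> (F - S) \<union> N.\<close>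
  consider "a \<in> S" "b \<in> F - S" | "a \<in> S" "b \<in> N"
    | z where "a \<notin> S" "a \<notin> F" "z \<in> S" "{z, a} \<in> E" "b \<in> N"
  proof (cases "a \<in> S")
    case False
    then have "a \<notin> F" using ab(2) by blast
    then obtain z where "z \<in> F" "{a, z} \<in> E" using dom \<open>a \<in> V\<close> by blast
    then have "z \<in> S" "b \<in> N"
      using ab \<open>a \<in> V\<close> \<open>b \<in> V\<close> \<open>a \<notin> S\<close> \<open>a \<notin> F\<close> unfolding N_def by auto
    with that(3) show thesis
      using \<open>a \<notin> S\<close> \<open>a \<notin> F\<close> \<open>{a, z} \<in> E\<close> by (simp add: insert_commute)
  qed (use ab(3) in blast)+
  then show thesis
  proof cases
    case 1
    then show thesis
      using ab(1) \<open>a \<in> V\<close> \<open>F \<subseteq> V\<close> by (intro path[of a b "[b]"]) (auto simp: is_path_def)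
  next
    case 2
    then obtain u where "u \<in> F - S" "{b, u} \<in> E" "b \<in> V - S - F" unfolding N_def by blast
    then show thesis
      using 2 ab(1) \<open>S \<subseteq> V\<close> \<open>F \<subseteq> V\<close> by (intro path[of a u "[b, u]"]) (auto simp: is_path_def)
  next
    case (3 z)
    then obtain u where "u \<in> F - S" "{b, u} \<in> E" "b \<in> V - S - F" unfolding N_def by blast
    then show thesis
      using 3 ab(1) \<open>a \<in> V\<close> \<open>a \<noteq> b\<close> \<open>S \<subseteq> V\<close> \<open>F \<subseteq> V\<close>
      by (intro path[of z u "[a, b, u]"]) (auto simp: is_path_def)
  qed
qed

lemma rainbow_connected_on_grow:
  assumes G: "simple_graph V E" "connected_graph V E"
    and dom: "\<forall>v\<in>V - F. \<exists>z\<in>F. {v, z} \<in> E" and "F \<subseteq> V"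
    and "rainbow_connected_on V E S c k" "S \<noteq> {}"
  shows "\<exists>D c'. F \<union> S \<subseteq> D \<and> rainbow_connected_on V E D c' (k + 3 * card (F - S))"
proof -
  have "finite F" using G(1) \<open>F \<subseteq> V\<close> finite_subset unfolding simple_graph_def by blast
  show ?thesis
    using assms(5,6)
  proof (induction "card (F - S)" arbitrary: S c k)
    case 0
    with \<open>finite F\<close> have "F \<union> S \<subseteq> S" by auto
    then show ?case using "0.prems"(1) "0.hyps"[symmetric] by (intro exI[of _ S] exI[of _ c]) simp
  next
    case (Suc n)
    have "S \<subseteq> V" using rainbow_connected_on_subset[OF Suc.prems(1)] .
    moreover have "F - S \<noteq> {}" using Suc.hyps(2) by force
    ultimately obtain s u q where path: "s \<in> S" "u \<in> F - S" "is_path V E (s # q) s u"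
      "set q \<inter> S = {}" "set q \<inter> F = {u}" "length q \<le> 3"
      using short_path_to_dominating_set[OF G dom] Suc.prems(2) \<open>F \<subseteq> V\<close> by metis
    then obtain c1 where "rainbow_connected_on V E (S \<union> set q) c1 (k + length q)"
      using rainbow_connected_on_add_path[OF Suc.prems(1)] by blast
    then have T: "rainbow_connected_on V E (S \<union> set q) c1 (k + 3)"
      using rainbow_connected_on_mono path(6) by fastforce
    have "F - (S \<union> set q) = (F - S) - {u}" using path(5) by blast
    then have n: "card (F - (S \<union> set q)) = n"
      using Suc.hyps(2) path(2) \<open>finite F\<close> by simp
    have "S \<union> set q \<noteq> {}" using Suc.prems(2) by blast
    with Suc.hyps(1)[OF n[symmetric] T] obtain D c' where "F \<union> (S \<union> set q) \<subseteq> D"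
      "rainbow_connected_on V E D c' (k + 3 + 3 * card (F - (S \<union> set q)))"
      by blast
    then show ?case
      unfolding n Suc.hyps(2)[symmetric] by (intro exI[of _ D] exI[of _ c']) (auto simp: algebra_simps)
  qed
qed

lemma rainbow_connected_on_dominating_set:
  assumes "simple_graph V E" "connected_graph V E"
    and "\<forall>v\<in>V - F. \<exists>z\<in>F. {v, z} \<in> E" "F \<subseteq> V" "F \<noteq> {}"
  obtains D c where "F \<subseteq> D" "rainbow_connected_on V E D c (3 * card F - 3)"
proof -
  obtain s where "s \<in> F" using assms(5) by blast
  then have "rainbow_connected_on V E {s} (\<lambda>_. 0) 0"
    using assms(4) by (intro rainbow_connected_on_singleton) blast
  from rainbow_connected_on_grow[OF assms(1-4) this insert_not_empty]
  obtain D c where "F \<union> {s} \<subseteq> D" "rainbow_connected_on V E D c (3 * card (F - {s}))"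
    by auto
  moreover have "card (F - {s}) = card F - 1"
    using \<open>s \<in> F\<close> by simp
  ultimately show thesis using that by (auto simp: right_diff_distrib')
qed

lemma rainbow_connected_on_imp_rainbow_connected:
  "rainbow_connected_on V E V c k \<Longrightarrow> rainbow_connected V E c"
  unfolding rainbow_connected_on_def rainbow_joined_def rainbow_connected_def by blast

lemma rc_le: "\<forall>e\<in>E. c e < k \<Longrightarrow> rainbow_connected V E c \<Longrightarrow> rc V E \<le> k"
  unfolding rc_def by (rule Least_le) blast

lemma extend_colouring_two_neighbours:
  assumes "\<forall>u\<in>V - D. \<exists>a b. a \<in> D \<and> b \<in> D \<and> a \<noteq> b \<and> {u, a} \<in> E \<and> {u, b} \<in> E"
  obtains A B c' where
    "\<And>u. u \<in> V - D \<Longrightarrow> A u \<in> D \<and> B u \<in> D \<and> {u, A u} \<in> E \<and> {u, B u} \<in> E"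
    "\<And>u. u \<in> V - D \<Longrightarrow> c' {u, A u} = k \<and> c' {u, B u} = Suc k"
    "\<And>e. e \<subseteq> D \<Longrightarrow> c e < k \<Longrightarrow> c' e = c e"
    "\<And>e. c' e < k + 2"
proof -
  obtain A where A: "\<forall>u\<in>V - D. \<exists>b. A u \<in> D \<and> b \<in> D \<and> A u \<noteq> b \<and> {u, A u} \<in> E \<and> {u, b} \<in> E"
    using bchoice[OF assms] by blast
  obtain B where AB: "\<forall>u\<in>V - D. A u \<in> D \<and> B u \<in> D \<and> A u \<noteq> B u \<and> {u, A u} \<in> E \<and> {u, B u} \<in> E"
    using bchoice[OF A] by blast
  \<comment> \<open>Edges inside D of colour at least k lie on none of the rainbow paths we use;
    taking min only keeps the palette below k + 2.\<close>
  define c' where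
    "c' e = (if e \<subseteq> D then min (c e) k else if \<exists>u\<in>V - D. e = {u, A u} then k else Suc k)" for e
  have "c' {u, B u} = Suc k" if "u \<in> V - D" for u
  proof -
    have "{u, B u} \<noteq> {u', A u'}" if "u' \<in> V - D" for u'
      using AB[rule_format, OF that] AB[rule_format, OF \<open>u \<in> V - D\<close>] \<open>u \<in> V - D\<close>
      by (auto simp: doubleton_eq_iff)
    then show ?thesis using that unfolding c'_def by auto
  qed
  moreover have "c' {u, A u} = k" if "u \<in> V - D" for u
    using that unfolding c'_def by auto
  ultimately show thesis
    using AB by (intro that[of A B c']) (auto simp: c'_def)
qed

lemma rainbow_connected_on_attach_two_neighbours:
  assumes D: "rainbow_connected_on V E D c k"
    and AB: "\<And>u. u \<in> V - D \<Longrightarrow> A u \<in> D \<and> B u \<in> D \<and> {u, A u} \<in> E \<and> {u, B u} \<in> E"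
    and cAB: "\<And>u. u \<in> V - D \<Longrightarrow> c {u, A u} = k \<and> c {u, B u} = Suc k"
  shows "rainbow_connected_on V E V c (k + 2)"
proof -
  have inside: "rainbow_joined V E D c k x y" if "x \<in> D" "y \<in> D" for x y
    using D that unfolding rainbow_connected_on_def by blast
  have leave: "rainbow_joined V E (insert x D) c (Suc k) x y" if x: "x \<in> V - D" and "y \<in> D" for x y
    by (rule rainbow_joined_Cons[OF inside[OF _ \<open>y \<in> D\<close>]]) (use AB[OF x] cAB[OF x] x in auto)
  have cross: "rainbow_joined V E (insert y (insert x D)) c (Suc (Suc k)) y x"
    if x: "x \<in> V - D" and y: "y \<in> V - D" and "x \<noteq> y" for x y
  proof (rule rainbow_joined_Cons)
    show "rainbow_joined V E (insert x D) c (Suc k) (B y) x"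
      using rainbow_joined_sym[OF leave[OF x]] AB[OF y] by blast
  qed (use AB[OF y] cAB[OF y] x y \<open>x \<noteq> y\<close> in auto)
  have "D \<subseteq> V" using rainbow_connected_on_subset[OF D] .
  have "rainbow_joined V E V c (k + 2) x y" if "x \<in> V" "y \<in> V" for x y
  proof -
    consider "x \<in> D" "y \<in> D" | "x \<in> D" "y \<notin> D" | "x \<notin> D" "y \<in> D"
      | "x \<notin> D" "y \<notin> D" "x = y" | "x \<notin> D" "y \<notin> D" "x \<noteq> y"
      by blast
    then have "rainbow_joined V E (insert x (insert y D)) c (k + 2) x y"
    proof cases
      case 1
      show ?thesis by (rule rainbow_joined_mono[OF inside[OF 1]]) auto
    next
      case 2
      show ?thesis by (rule rainbow_joined_mono[OF rainbow_joined_sym[OF leave]]) (use 2 that in auto)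
    next
      case 3
      show ?thesis by (rule rainbow_joined_mono[OF leave]) (use 3 that in auto)
    next
      case 4
      show ?thesis using rainbow_joined_refl[OF \<open>x \<in> V\<close>] 4(3) by simp
    next
      case 5
      show ?thesis by (rule rainbow_joined_mono[OF rainbow_joined_sym[OF cross]]) (use 5 that in auto)
    qed
    then show ?thesis by (rule rainbow_joined_mono) (use \<open>D \<subseteq> V\<close> that in auto)
  qed
  then show ?thesis unfolding rainbow_connected_on_def by blast
qed

lemma rainbow_connected_on_extend:
  assumes D: "rainbow_connected_on V E D c k"
    and "\<forall>u\<in>V - D. \<exists>a b. a \<in> D \<and> b \<in> D \<and> a \<noteq> b \<and> {u, a} \<in> E \<and> {u, b} \<in> E"
  obtains c' where "\<forall>e. c' e < k + 2" "rainbow_connected_on V E V c' (k + 2)"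
proof -
  obtain A B c' where AB: "\<And>u. u \<in> V - D \<Longrightarrow> A u \<in> D \<and> B u \<in> D \<and> {u, A u} \<in> E \<and> {u, B u} \<in> E"
    and c'AB: "\<And>u. u \<in> V - D \<Longrightarrow> c' {u, A u} = k \<and> c' {u, B u} = Suc k"
    and c'D: "\<And>e. e \<subseteq> D \<Longrightarrow> c e < k \<Longrightarrow> c' e = c e"
    and bound: "\<And>e. c' e < k + 2"
    using extend_colouring_two_neighbours[OF assms(2), where c = c and k = k] by blast
  have "rainbow_connected_on V E D c' k" using rainbow_connected_on_cong[OF D c'D] .
  then have "rainbow_connected_on V E V c' (k + 2)"
    using rainbow_connected_on_attach_two_neighbours AB c'AB by blast
  with bound show thesis by (intro that[of c']) auto
qed

theorem theorem2:
  fixes V :: "'a set" and E :: "'a set set"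
  assumes "simple_graph V E" and "V \<noteq> {}" and "connected_graph V E"
  shows "int (rc V E) \<le> 3 * int (forest_number V E) - 1"
proof -
  have "finite V" using assms(1) unfolding simple_graph_def by simp
  obtain F where F: "F \<subseteq> V" "F \<noteq> {}" "is_forest F (induced_edges E F)"
    "card F = forest_number V E"
    and max: "\<And>S. S \<subseteq> V \<Longrightarrow> is_forest S (induced_edges E S) \<Longrightarrow> card S \<le> card F"
    using maximum_induced_forest[OF \<open>finite V\<close> assms(2), where E = E] by blast
  have two: "\<forall>u\<in>V - F. \<exists>a b. a \<in> F \<and> b \<in> F \<and> a \<noteq> b \<and> {u, a} \<in> E \<and> {u, b} \<in> E"
    using maximum_induced_forest_two_neighbours[OF \<open>finite V\<close> F(1,3) max] by blast
  then have "\<forall>v\<in>V - F. \<exists>z\<in>F. {v, z} \<in> E" by blast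
  then obtain D c where D: "F \<subseteq> D" "rainbow_connected_on V E D c (3 * card F - 3)"
    using rainbow_connected_on_dominating_set[OF assms(1,3) _ F(1,2)] by blast
  from two D(1) have "\<forall>u\<in>V - D. \<exists>a b. a \<in> D \<and> b \<in> D \<and> a \<noteq> b \<and> {u, a} \<in> E \<and> {u, b} \<in> E"
    by blast
  then obtain c' where c': "\<forall>e. c' e < 3 * card F - 3 + 2"
    "rainbow_connected_on V E V c' (3 * card F - 3 + 2)"
    by (rule rainbow_connected_on_extend[OF D(2)])
  have "rc V E \<le> 3 * card F - 3 + 2"
    by (rule rc_le[OF _ rainbow_connected_on_imp_rainbow_connected[OF c'(2)]]) (use c'(1) in blast)
  moreover have "card F \<noteq> 0" using F(1,2) \<open>finite V\<close> finite_subset by fastforce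
  ultimately show ?thesis using F(4) by linarith
qed

end
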